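(* For every node $p$, if $p$ is active at time $t \geq t_p^e + 2D$, then $SysInfo^{[0, t-D]} \subseteq Changes_p^t$.
   Context: Model: asynchronous message passing; an adversary generates at most one Enter($p$), Leave($p$), Crash($p$) signal per node (forced leaves of crashed nodes may be generated at other active nodes and count toward churn). A node is present at $t$ if entered and not left; $N(t)$ is the number present, $N(t)\geq N_{min}$; $S_0$ is the set present at time 0; active = present and not crashed. A message broadcast by $p$ at time $t$ is received within $D$ time by every $q\neq p$ active throughout $[t,t+D]$ ($D$ unknown, no lower bound, FIFO). Churn: for some $\alpha<1$, at most $\alpha N(t)$ nodes enter or leave during any $[t,t+D]$. Failures: for some $\Delta<1$, at any $t$ at most $\Delta N(t)$ present nodes have crashed. Algorithm (CCReg, joining part): node $p$ keeps $Changes_p$ of $enter(q)$, $join(q)$, $leave(q)$ events (initially $\{enter(q),join(q): q\in S_0\}$ if $p\in S_0$, else empty); $Changes_p^t$ is its value at time $t$, and $Present_p=\{q: enter(q)\in Changes_p, leave(q)\notin Changes_p\}$. On Enter($p$) at time $t_p^e$ ($t_p^e=0$ for $p\in S_0$), $p$ adds $enter(p)$ and broadcasts enter; a receiver adds $enter(p)$ and broadcasts an enter-echo with its Changes set (and value, is_joined flag); receivers merge Changes sets from enter-echoes. After its first enter-echo from a joined node, $p$ sets $join\_bound:=\gamma|Present_p|$ and joins at time $t_p^j$ (adds $join(p)$, broadcasts joined) once it has received $join\_bound$ enter-echoes. Joined messages (sent at $t_q^j$) and leave messages (sent at $t_q^\ell$) cause receivers to add the event and broadcast an echo, whose receivers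 also add it. For a time interval $I$, $SysInfo^I = \{enter(q): t_q^e\in I\}\cup\{join(q): t_q^j\in I\}\cup\{leave(q): t_q^\ell\in I\}$. Assumptions: $\alpha\leq 1-2^{-1/4}$ and $1<((1-\alpha)^3-\Delta(1+\alpha)^3)N_{min}$. *)

theory Defs
  imports Complex_Main
begin

datatype 'n event = Ev_enter 'n | Ev_join 'n | Ev_leave 'n

text \<open>Message contents. An enter-echo carries the node whose enter it echoes,
  the sender's Changes set, its value and its is_joined flag.\<close>
datatype ('n, 'v) msg =
    MEnter 'n
  | MEnterEcho 'n "'n event set" 'v bool
  | MJoined 'n
  | MJoinedEcho 'n
  | MLeave 'n
  | MLeaveEcho 'n

text \<open>A broadcast is identified by (sender, sending time, content).\<close>
type_synonym ('n, 'v) bcast = "'n \<times> real \<times> ('n, 'v) msg"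

record ('n, 'v) run =
  S0 :: "'n set"
  enter_t :: "'n \<Rightarrow> real option"   \<comment> \<open>t_p^e (0 for nodes of S0)\<close>
  leave_t :: "'n \<Rightarrow> real option"
  crash_t :: "'n \<Rightarrow> real option"
  join_t  :: "'n \<Rightarrow> real option"   \<comment> \<open>t_p^j (0 for nodes of S0)\<close>
  bcasts  :: "('n, 'v) bcast set"
  recv    :: "'n \<Rightarrow> ('n, 'v) bcast \<Rightarrow> real option"
  Changes :: "'n \<Rightarrow> real \<Rightarrow> 'n event set"

definition present :: "('n, 'v) run \<Rightarrow> 'n \<Rightarrow> real \<Rightarrow> bool" where
  "present R q t \<longleftrightarrow> (\<exists>e. enter_t R q = Some e \<and> e \<le> t) \<and> \<not> (\<exists>l. leave_t R q = Some l \<and> l \<le> t)"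

definition crashed :: "('n, 'v) run \<Rightarrow> 'n \<Rightarrow> real \<Rightarrow> bool" where
  "crashed R q t \<longleftrightarrow> (\<exists>c. crash_t R q = Some c \<and> c \<le> t)"

definition active :: "('n, 'v) run \<Rightarrow> 'n \<Rightarrow> real \<Rightarrow> bool" where
  "active R q t \<longleftrightarrow> present R q t \<and> \<not> crashed R q t"

definition Nt :: "('n, 'v) run \<Rightarrow> real \<Rightarrow> nat" where
  "Nt R t = card {q. present R q t}"

definition churners :: "('n, 'v) run \<Rightarrow> real \<Rightarrow> real \<Rightarrow> 'n set" where
  "churners R D t = {q. (q \<notin> S0 R \<and> (\<exists>e. enter_t R q = Some e \<and> t \<le> e \<and> e \<le> t + D))
                       \<or> (\<exists>l. leave_t R q = Some l \<and> t \<le> l \<and> l \<le> t + D)}"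

definition SysInfo :: "('n, 'v) run \<Rightarrow> real set \<Rightarrow> 'n event set" where
  "SysInfo R I =
     {Ev_enter q | q. \<exists>e. enter_t R q = Some e \<and> e \<in> I}
   \<union> {Ev_join q | q. \<exists>j. join_t R q = Some j \<and> j \<in> I}
   \<union> {Ev_leave q | q. \<exists>l. leave_t R q = Some l \<and> l \<in> I}"

definition adversary_ok :: "real \<Rightarrow> real \<Rightarrow> nat \<Rightarrow> real \<Rightarrow> ('n, 'v) run \<Rightarrow> bool" where
  "adversary_ok \<alpha> \<Delta> Nmin D R \<longleftrightarrow>
     (\<forall>q. q \<in> S0 R \<longleftrightarrow> enter_t R q = Some 0)
   \<and> (\<forall>q e. enter_t R q = Some e \<longrightarrow> q \<notin> S0 R \<longrightarrow> 0 < e)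
   \<and> (\<forall>q l. leave_t R q = Some l \<longrightarrow> (\<exists>e. enter_t R q = Some e \<and> e \<le> l))
   \<and> (\<forall>q c. crash_t R q = Some c \<longrightarrow> present R q c)
   \<and> (\<forall>t\<ge>0. finite {q. present R q t} \<and> Nmin \<le> Nt R t)
   \<and> (\<forall>t\<ge>0. finite (churners R D t) \<and> real (card (churners R D t)) \<le> \<alpha> * real (Nt R t))
   \<and> (\<forall>t\<ge>0. real (card {q. present R q t \<and> crashed R q t}) \<le> \<Delta> * real (Nt R t))"

definition network_ok :: "real \<Rightarrow> ('n, 'v) run \<Rightarrow> bool" where
  "network_ok D R \<longleftrightarrow>
     (\<forall>p t m q. (p, t, m) \<in> bcasts R \<longrightarrow> q \<noteq> p \<longrightarrow>
        (\<forall>\<tau>. t \<le> \<tau> \<and> \<tau> \<le> t + D \<longrightarrow> active R q \<tau>) \<longrightarrow>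
        (\<exists>s. recv R q (p, t, m) = Some s \<and> t \<le> s \<and> s \<le> t + D))
   \<and> (\<forall>q b s. recv R q b = Some s \<longrightarrow>
        b \<in> bcasts R \<and> q \<noteq> fst b \<and> fst (snd b) \<le> s \<and> active R q s)"

text \<open>The joining part of CCReg, as far as it concerns the Changes sets.\<close>
definition algorithm_ok :: "('n, 'v) run \<Rightarrow> bool" where
  "algorithm_ok R \<longleftrightarrow>
     \<comment> \<open>Changes only grows\<close>
     (\<forall>p s s'. s \<le> s' \<longrightarrow> Changes R p s \<subseteq> Changes R p s')
     \<comment> \<open>initial value for nodes of S0\<close>
   \<and> (\<forall>p \<in> S0 R. {Ev_enter q | q. q \<in> S0 R} \<union> {Ev_join q | q. q \<in> S0 R} \<subseteq> Changes R p 0)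
     \<comment> \<open>S0 nodes are joined at time 0\<close>
   \<and> (\<forall>p \<in> S0 R. join_t R p = Some 0)
     \<comment> \<open>Enter(p): add enter(p) and broadcast enter\<close>
   \<and> (\<forall>p e. enter_t R p = Some e \<longrightarrow> p \<notin> S0 R \<longrightarrow>
        Ev_enter p \<in> Changes R p e \<and> (p, e, MEnter p) \<in> bcasts R)
     \<comment> \<open>joining (at a time when the node is active): add join(p), broadcast joined\<close>
   \<and> (\<forall>p j. join_t R p = Some j \<longrightarrow> p \<notin> S0 R \<longrightarrow>
        (\<exists>e. enter_t R p = Some e \<and> e \<le> j) \<and> active R p j \<and>
        Ev_join p \<in> Changes R p j \<and> (p, j, MJoined p) \<in> bcasts R)
     \<comment> \<open>leave of q: broadcast by q itself, or (forced leave of a crashed q) by another active node\<close>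
   \<and> (\<forall>q l. leave_t R q = Some l \<longrightarrow>
        (\<exists>r. (r, l, MLeave q) \<in> bcasts R \<and> Ev_leave q \<in> Changes R r l \<and>
             ((\<not> crashed R q l \<and> r = q) \<or> (crashed R q l \<and> r \<noteq> q \<and> active R r l))))
     \<comment> \<open>reactions to received messages (receipt at time s by an active node)\<close>
   \<and> (\<forall>q p t x s. recv R q (p, t, MEnter x) = Some s \<longrightarrow>
        Ev_enter x \<in> Changes R q s \<and>
        (\<exists>C v b. (q, s, MEnterEcho x C v b) \<in> bcasts R \<and> Ev_enter x \<in> C \<and>
                 (\<forall>s'<s. Changes R q s' \<subseteq> C) \<and> C \<subseteq> Changes R q s))
   \<and> (\<forall>q p t x C v b s. recv R q (p, t, MEnterEcho x C v b) = Some s \<longrightarrow> C \<subseteq> Changes R q s)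
   \<and> (\<forall>q p t x s. recv R q (p, t, MJoined x) = Some s \<longrightarrow>
        Ev_join x \<in> Changes R q s \<and> (q, s, MJoinedEcho x) \<in> bcasts R)
   \<and> (\<forall>q p t x s. recv R q (p, t, MJoinedEcho x) = Some s \<longrightarrow> Ev_join x \<in> Changes R q s)
   \<and> (\<forall>q p t x s. recv R q (p, t, MLeave x) = Some s \<longrightarrow>
        Ev_leave x \<in> Changes R q s \<and> (q, s, MLeaveEcho x) \<in> bcasts R)
   \<and> (\<forall>q p t x s. recv R q (p, t, MLeaveEcho x) = Some s \<longrightarrow> Ev_leave x \<in> Changes R q s)"

definition ccreg_run :: "real \<Rightarrow> real \<Rightarrow> nat \<Rightarrow> real \<Rightarrow> ('n, 'v) run \<Rightarrow> bool" where
  "ccreg_run \<alpha> \<Delta> Nmin D R \<longleftrightarrow>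
     adversary_ok \<alpha> \<Delta> Nmin D R \<and> network_ok D R \<and> algorithm_ok R"

end

theory Submission
  imports Defs
begin

text \<open>The proof is an induction on t in steps of D. Let p enter at e, be active at t \<ge> e + 2D,
  and let x be an event at time \<tau> \<le> t - D. If p is active throughout [\<tau>, \<tau> + D], the broadcast
  announcing x reaches it directly. Otherwise a counting argument (per window of length D at most
  \<alpha>N nodes enter or leave, at any time at most \<Delta>N present nodes have crashed) yields a node r
  present at t0 = max 0 (e - 5D/2) that stays active until e + D. It answers p's enter message with
  its Changes set, which p receives by e + 2D and which contains x: for \<tau> \<le> e - 3D/2 by the
  induction hypothesis for r at time e - D/2, for an initial event because r is then in S0, and
  otherwise because r is active throughout [\<tau>, \<tau> + D] and either learns x before echoing or
  forwards x to p in time.\<close>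

lemma real_step_induct:
  fixes D :: real
  assumes "0 < D"
    and step: "\<And>t. (\<And>t'. 0 \<le> t' \<Longrightarrow> t' < t - D \<Longrightarrow> P t') \<Longrightarrow> P t"
  shows "P t"
proof -
  have "\<forall>t. t < real n * D \<longrightarrow> P t" for n
  proof (induction n)
    case 0
    show ?case
    proof (intro allI impI)
      fix t :: real assume "t < real 0 * D"
      then have "\<not> (0 \<le> t' \<and> t' < t - D)" for t' using \<open>0 < D\<close> by simp
      then show "P t" using step by blast
    qed
  next
    case (Suc n)
    show ?case
    proof (intro allI impI)
      fix t assume "t < real (Suc n) * D"
      then have "t' < real n * D" if "t' < t - D" for t' using that by (simp add: algebra_simps)
      then show "P t" using Suc.IH step by blast
    qed
  qed
  moreover obtain n :: nat where "t / D < real n"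
    using reals_Archimedean2 by blast
  ultimately show ?thesis
    using \<open>0 < D\<close> by (simp add: divide_less_eq)
qed

lemma interval_covered_by_steps:
  fixes t0 v D :: real
  assumes "0 < n" "t0 \<le> v" "v \<le> t0 + real n * D"
  shows "\<exists>i<n. t0 + real i * D \<le> v \<and> v \<le> t0 + real i * D + D"
  using assms
proof (induction n)
  case 0
  then show ?case by simp
next
  case (Suc n)
  show ?case
  proof (cases "0 < n \<and> v \<le> t0 + real n * D")
    case True
    then show ?thesis using Suc.IH Suc.prems(2) less_Suc_eq by blast
  next
    case False
    then show ?thesis using Suc.prems by (intro exI[of _ n]) (auto simp: algebra_simps)
  qed
qed

text \<open>Here a, l and m count the nodes that stay, leave and enter during a window of length at
  most 4D, and K bounds the growth of the system over that window.\<close>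

lemma churn_crash_arith:
  fixes \<Delta> K a l m :: real
  assumes "0 \<le> \<Delta>" "K < 2" "\<Delta> * K < 1" "0 \<le> l" "0 \<le> m" "0 < a + l"
    and churn: "l + m \<le> (K - 1) * (a + l)"
  shows "\<Delta> * (a + m) < a"
proof -
  have "(K - 1) * (a + l) < a + l" using assms(2,6) by simp
  then have a_pos: "0 < a" using churn assms(5) by linarith
  have "\<Delta> * m \<le> \<Delta> * ((K - 1) * (a + l) - l)"
    using churn assms(1) by (intro mult_left_mono) auto
  moreover have "\<Delta> * (K - 2) * l \<le> 0"
    using assms(1,2,4) by (simp add: mult_nonneg_nonpos mult_nonpos_nonneg)
  moreover have "\<Delta> * K * a < a" using assms(3) a_pos by simp
  ultimately show ?thesis by (simp add: algebra_simps)
qed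

lemma growth_factor_lt_2:
  fixes \<alpha> :: real
  assumes "0 \<le> \<alpha>" "\<alpha> \<le> 1 - 2 powr (-1/4)"
  shows "(1 + \<alpha>)^4 < 2"
proof -
  define u :: real where "u = 2 powr (-1/4)"
  have u_pos: "0 < u" unfolding u_def by simp
  have "u ^ 4 = 2 powr (-1/4 * 4)"
    unfolding u_def by (simp add: powr_realpow[symmetric] powr_powr)
  then have u4: "u ^ 4 = 1/2" by (simp add: powr_minus)
  have "0.84 < u"
  proof (rule ccontr)
    assume "\<not> 0.84 < u"
    then have "u ^ 4 \<le> 0.84 ^ 4" using u_pos by (intro power_mono) auto
    then show False using u4 by (simp add: power_numeral_reduce)
  qed
  then have "(1 + \<alpha>)^4 \<le> 1.16 ^ 4"
    using assms unfolding u_def by (intro power_mono) auto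
  then show ?thesis by (simp add: power_numeral_reduce)
qed

lemma crash_factor_lt_1:
  fixes \<alpha> \<Delta> :: real
  assumes "0 \<le> \<alpha>" "\<alpha> \<le> 1" "\<Delta> * (1 + \<alpha>)^3 < (1 - \<alpha>)^3"
  shows "\<Delta> * (1 + \<alpha>)^4 < 1"
proof -
  have "\<Delta> * (1 + \<alpha>)^4 = \<Delta> * (1 + \<alpha>)^3 * (1 + \<alpha>)" by (simp add: power_numeral_reduce)
  also have "\<dots> < (1 - \<alpha>)^3 * (1 + \<alpha>)"
    using assms by (intro mult_strict_right_mono) auto
  also have "\<dots> = (1 - \<alpha>)^2 * (1 - \<alpha>^2)" by (simp add: power_numeral_reduce algebra_simps)
  also have "\<dots> \<le> 1"
    using assms(1,2) by (intro mult_le_one) (auto simp: power_le_one)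
  finally show ?thesis .
qed

section \<open>Activity and events\<close>

lemma enter_before_present:
  "present R q t \<Longrightarrow> \<exists>e. enter_t R q = Some e \<and> e \<le> t"
  unfolding present_def by blast

lemma leave_after_present: "present R q t \<Longrightarrow> leave_t R q = Some l \<Longrightarrow> t < l"
  unfolding present_def by force

lemma present_until:
  assumes "present R q t0" "t0 \<le> \<sigma>" "\<forall>l. leave_t R q = Some l \<longrightarrow> \<sigma> < l"
  shows "present R q \<sigma>"
  using assms unfolding present_def by force

definition active_throughout :: "('n, 'v) run \<Rightarrow> 'n \<Rightarrow> real \<Rightarrow> real \<Rightarrow> bool" where
  "active_throughout R q a b \<longleftrightarrow> (\<forall>\<sigma>. a \<le> \<sigma> \<and> \<sigma> \<le> b \<longrightarrow> active R q \<sigma>)"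

lemma active_throughout_mono:
  "active_throughout R q a b \<Longrightarrow> a \<le> a' \<Longrightarrow> b' \<le> b \<Longrightarrow> active_throughout R q a' b'"
  unfolding active_throughout_def by auto

lemma active_throughout_since_enter:
  assumes "active R q t" "enter_t R q = Some e"
  shows "active_throughout R q e t"
  using assms unfolding active_throughout_def active_def present_def crashed_def by fastforce

lemma active_throughout_if_stays:
  assumes "present R q t0" "\<forall>l. leave_t R q = Some l \<longrightarrow> T < l" "\<not> crashed R q T"
  shows "active_throughout R q t0 T"
  unfolding active_throughout_def active_def
proof (intro allI impI conjI)
  fix \<sigma> assume \<sigma>: "t0 \<le> \<sigma> \<and> \<sigma> \<le> T"
  show "present R q \<sigma>" using present_until[OF assms(1)] \<sigma> assms(2) by force
  show "\<not> crashed R q \<sigma>" using assms(3) \<sigma> unfolding crashed_def by force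
qed

lemma churners_cover:
  assumes "0 < n" "t0 \<le> v" "v \<le> t0 + real n * D"
    and "(q \<notin> S0 R \<and> enter_t R q = Some v) \<or> leave_t R q = Some v"
  shows "q \<in> (\<Union>i<n. churners R D (t0 + real i * D))"
proof -
  obtain i where "i < n" "t0 + real i * D \<le> v" "v \<le> t0 + real i * D + D"
    using interval_covered_by_steps[OF assms(1-3)] by blast
  then show ?thesis using assms(4) unfolding churners_def by blast
qed

definition occurs_at :: "('n, 'v) run \<Rightarrow> 'n event \<Rightarrow> real \<Rightarrow> bool" where
  "occurs_at R x \<tau> \<longleftrightarrow> (case x of
      Ev_enter q \<Rightarrow> enter_t R q = Some \<tau>
    | Ev_join q \<Rightarrow> join_t R q = Some \<tau>
    | Ev_leave q \<Rightarrow> leave_t R q = Some \<tau>)"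

text \<open>Initial events are the ones never broadcast: the nodes of S0 know them from time 0.\<close>

definition initial_event :: "('n, 'v) run \<Rightarrow> 'n event \<Rightarrow> bool" where
  "initial_event R x \<longleftrightarrow> (case x of
      Ev_enter q \<Rightarrow> q \<in> S0 R
    | Ev_join q \<Rightarrow> q \<in> S0 R
    | Ev_leave q \<Rightarrow> False)"

definition informs :: "('n, 'v) run \<Rightarrow> 'n event \<Rightarrow> ('n, 'v) bcast \<Rightarrow> bool" where
  "informs R x b \<longleftrightarrow> (\<forall>z s. recv R z b = Some s \<longrightarrow> x \<in> Changes R z s)"

lemma SysInfo_iff_occurs_at: "x \<in> SysInfo R I \<longleftrightarrow> (\<exists>\<tau>\<in>I. occurs_at R x \<tau>)"
  by (cases x) (auto simp: SysInfo_def occurs_at_def)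

definition leavers :: "('n, 'v) run \<Rightarrow> real \<Rightarrow> real \<Rightarrow> 'n set" where
  "leavers R t0 T = {q. present R q t0 \<and> (\<exists>l. leave_t R q = Some l \<and> l \<le> T)}"

definition entrants :: "('n, 'v) run \<Rightarrow> real \<Rightarrow> real \<Rightarrow> 'n set" where
  "entrants R t0 T = {q. present R q T \<and> \<not> present R q t0}"

section \<open>Propagation of events\<close>

locale ccreg_system =
  fixes \<alpha> \<Delta> :: real and Nmin :: nat and D :: real and R :: "('n, 'v) run"
  assumes run: "ccreg_run \<alpha> \<Delta> Nmin D R"
    and D_pos: "0 < D"
begin

lemma adversary: "adversary_ok \<alpha> \<Delta> Nmin D R"
  and network: "network_ok D R"
  and algorithm: "algorithm_ok R"
  using run unfolding ccreg_run_def by blast+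

lemma S0_iff_enter_0: "q \<in> S0 R \<longleftrightarrow> enter_t R q = Some 0"
  using adversary unfolding adversary_ok_def by simp

lemma enter_pos: "enter_t R q = Some e \<Longrightarrow> q \<notin> S0 R \<Longrightarrow> 0 < e"
  using adversary unfolding adversary_ok_def by simp

lemma finite_present: "0 \<le> t \<Longrightarrow> finite {q. present R q t}"
  using adversary unfolding adversary_ok_def by simp

lemma Nmin_le_Nt: "0 \<le> t \<Longrightarrow> Nmin \<le> Nt R t"
  using adversary unfolding adversary_ok_def by simp

lemma finite_churners: "0 \<le> t \<Longrightarrow> finite (churners R D t)"
  using adversary unfolding adversary_ok_def by simp

lemma card_churners_le: "0 \<le> t \<Longrightarrow> real (card (churners R D t)) \<le> \<alpha> * real (Nt R t)"
  using adversary unfolding adversary_ok_def by simp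

lemma card_crashed_le:
  "0 \<le> t \<Longrightarrow> real (card {q. present R q t \<and> crashed R q t}) \<le> \<Delta> * real (Nt R t)"
  using adversary unfolding adversary_ok_def by simp

lemma recv_within_D:
  assumes "(p, t, m) \<in> bcasts R" "q \<noteq> p" "active_throughout R q t (t + D)"
  shows "\<exists>s. recv R q (p, t, m) = Some s \<and> t \<le> s \<and> s \<le> t + D"
  using network assms unfolding network_ok_def active_throughout_def by blast

lemma Changes_mono: "s \<le> s' \<Longrightarrow> Changes R p s \<subseteq> Changes R p s'"
  using algorithm unfolding algorithm_ok_def by simp

lemma S0_Changes_0:
  "p \<in> S0 R \<Longrightarrow> q \<in> S0 R \<Longrightarrow> Ev_enter q \<in> Changes R p 0 \<and> Ev_join q \<in> Changes R p 0"
  using algorithm unfolding algorithm_ok_def by (elim conjE) blast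

lemma join_t_S0: "p \<in> S0 R \<Longrightarrow> join_t R p = Some 0"
  using algorithm unfolding algorithm_ok_def by simp

lemma enter_broadcast:
  "enter_t R p = Some e \<Longrightarrow> p \<notin> S0 R \<Longrightarrow> Ev_enter p \<in> Changes R p e \<and> (p, e, MEnter p) \<in> bcasts R"
  using algorithm unfolding algorithm_ok_def by simp

lemma join_broadcast:
  "join_t R p = Some j \<Longrightarrow> p \<notin> S0 R \<Longrightarrow> Ev_join p \<in> Changes R p j \<and> (p, j, MJoined p) \<in> bcasts R"
  using algorithm unfolding algorithm_ok_def by simp

lemma leave_broadcast:
  "leave_t R q = Some l \<Longrightarrow> \<exists>r. (r, l, MLeave q) \<in> bcasts R \<and> Ev_leave q \<in> Changes R r l"
  using algorithm unfolding algorithm_ok_def by (elim conjE) meson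

lemma recv_MEnter:
  "recv R q (p, t, MEnter x) = Some s \<Longrightarrow> Ev_enter x \<in> Changes R q s \<and>
     (\<exists>C v b. (q, s, MEnterEcho x C v b) \<in> bcasts R \<and> Ev_enter x \<in> C \<and> (\<forall>s'<s. Changes R q s' \<subseteq> C))"
  using algorithm unfolding algorithm_ok_def by (elim conjE) meson

lemma recv_MEnterEcho: "recv R q (p, t, MEnterEcho x C v b) = Some s \<Longrightarrow> C \<subseteq> Changes R q s"
  using algorithm unfolding algorithm_ok_def by (elim conjE) meson

lemma recv_MJoined:
  "recv R q (p, t, MJoined x) = Some s \<Longrightarrow> Ev_join x \<in> Changes R q s \<and> (q, s, MJoinedEcho x) \<in> bcasts R"
  using algorithm unfolding algorithm_ok_def by (elim conjE) meson

lemma recv_MJoinedEcho: "recv R q (p, t, MJoinedEcho x) = Some s \<Longrightarrow> Ev_join x \<in> Changes R q s"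
  using algorithm unfolding algorithm_ok_def by (elim conjE) meson

lemma recv_MLeave:
  "recv R q (p, t, MLeave x) = Some s \<Longrightarrow> Ev_leave x \<in> Changes R q s \<and> (q, s, MLeaveEcho x) \<in> bcasts R"
  using algorithm unfolding algorithm_ok_def by (elim conjE) meson

lemma recv_MLeaveEcho: "recv R q (p, t, MLeaveEcho x) = Some s \<Longrightarrow> Ev_leave x \<in> Changes R q s"
  using algorithm unfolding algorithm_ok_def by (elim conjE) meson

lemma initial_event_known:
  assumes "initial_event R x" "occurs_at R x \<tau>"
  shows "\<tau> = 0 \<and> (\<forall>r\<in>S0 R. x \<in> Changes R r 0)"
proof (cases x)
  case (Ev_enter q)
  then have "q \<in> S0 R" "enter_t R q = Some \<tau>"
    using assms by (auto simp: initial_event_def occurs_at_def)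
  then show ?thesis using Ev_enter S0_iff_enter_0[of q] S0_Changes_0 by auto
next
  case (Ev_join q)
  then have "q \<in> S0 R" "join_t R q = Some \<tau>"
    using assms by (auto simp: initial_event_def occurs_at_def)
  then show ?thesis using Ev_join join_t_S0[of q] S0_Changes_0 by auto
next
  case (Ev_leave q)
  then show ?thesis using assms(1) by (simp add: initial_event_def)
qed

lemma initial_event_known_at_start:
  assumes "initial_event R x" "occurs_at R x \<tau>" "enter_t R r = Some er" "er \<le> 0"
  shows "x \<in> Changes R r 0"
proof -
  have "r \<in> S0 R" using enter_pos[OF assms(3)] assms(4) by force
  then show ?thesis using initial_event_known[OF assms(1,2)] by blast
qed

lemma noninitial_event_broadcast:
  assumes "occurs_at R x \<tau>" "\<not> initial_event R x"
  shows "\<exists>w M. (w, \<tau>, M) \<in> bcasts R \<and> x \<in> Changes R w \<tau> \<and> informs R x (w, \<tau>, M) \<and>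
    (\<forall>y s. recv R y (w, \<tau>, M) = Some s \<longrightarrow> (\<exists>E. (y, s, E) \<in> bcasts R \<and> informs R x (y, s, E)))"
proof (cases x)
  case (Ev_enter q)
  then have "enter_t R q = Some \<tau>" "q \<notin> S0 R"
    using assms by (auto simp: occurs_at_def initial_event_def)
  then have "(q, \<tau>, MEnter q) \<in> bcasts R" "x \<in> Changes R q \<tau>"
    using enter_broadcast Ev_enter by auto
  moreover have "informs R x (q, \<tau>, MEnter q)"
    unfolding informs_def using recv_MEnter Ev_enter by blast
  moreover have "\<exists>E. (y, s, E) \<in> bcasts R \<and> informs R x (y, s, E)"
    if received: "recv R y (q, \<tau>, MEnter q) = Some s" for y s
  proof -
    obtain C v b where "(y, s, MEnterEcho q C v b) \<in> bcasts R" "Ev_enter q \<in> C"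
      using recv_MEnter[OF received] by blast
    then show ?thesis using recv_MEnterEcho Ev_enter unfolding informs_def by blast
  qed
  ultimately show ?thesis by blast
next
  case (Ev_join q)
  then have "join_t R q = Some \<tau>" "q \<notin> S0 R"
    using assms by (auto simp: occurs_at_def initial_event_def)
  then have "(q, \<tau>, MJoined q) \<in> bcasts R" "x \<in> Changes R q \<tau>"
    using join_broadcast Ev_join by auto
  moreover have "informs R x (q, \<tau>, MJoined q)" "informs R x (y, s, MJoinedEcho q)" for y s
    unfolding informs_def using recv_MJoined recv_MJoinedEcho Ev_join by blast+
  ultimately show ?thesis using recv_MJoined by blast
next
  case (Ev_leave q)
  then have "leave_t R q = Some \<tau>"
    using assms by (auto simp: occurs_at_def)
  then obtain w where "(w, \<tau>, MLeave q) \<in> bcasts R" "x \<in> Changes R w \<tau>"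
    using leave_broadcast Ev_leave by blast
  moreover have "informs R x (w, \<tau>, MLeave q)" "informs R x (y, s, MLeaveEcho q)" for y s
    unfolding informs_def using recv_MLeave recv_MLeaveEcho Ev_leave by blast+
  ultimately show ?thesis using recv_MLeave by blast
qed

lemma informed_within_D:
  assumes "(w, \<tau>, M) \<in> bcasts R" "informs R x (w, \<tau>, M)" "x \<in> Changes R w \<tau>"
    and "active_throughout R z \<tau> (\<tau> + D)"
  shows "x \<in> Changes R z (\<tau> + D)"
proof (cases "z = w")
  case True
  then show ?thesis using assms(3) Changes_mono[of \<tau> "\<tau> + D" w] D_pos by auto
next
  case False
  then obtain s where "recv R z (w, \<tau>, M) = Some s" "s \<le> \<tau> + D"
    using recv_within_D[OF assms(1) _ assms(4)] by blast
  then show ?thesis using assms(2) Changes_mono[of s "\<tau> + D" z] unfolding informs_def by blast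
qed

lemma event_rebroadcast:
  assumes "occurs_at R x \<tau>" "\<not> initial_event R x" "active_throughout R r \<tau> (\<tau> + D)"
  shows "\<exists>s E. \<tau> \<le> s \<and> s \<le> \<tau> + D \<and> x \<in> Changes R r s \<and> (r, s, E) \<in> bcasts R \<and> informs R x (r, s, E)"
proof -
  obtain w M where w: "(w, \<tau>, M) \<in> bcasts R" "x \<in> Changes R w \<tau>" "informs R x (w, \<tau>, M)"
    and echo: "\<forall>y s. recv R y (w, \<tau>, M) = Some s \<longrightarrow> (\<exists>E. (y, s, E) \<in> bcasts R \<and> informs R x (y, s, E))"
    using noninitial_event_broadcast[OF assms(1,2)] by blast
  show ?thesis
  proof (cases "r = w")
    case True
    then show ?thesis using w D_pos by (intro exI[of _ \<tau>] exI[of _ M]) auto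
  next
    case False
    then obtain s where s: "recv R r (w, \<tau>, M) = Some s" "\<tau> \<le> s" "s \<le> \<tau> + D"
      using recv_within_D[OF w(1) _ assms(3)] by blast
    then show ?thesis using echo w(3) unfolding informs_def by blast
  qed
qed

lemma event_learned_directly:
  assumes "occurs_at R x \<tau>" "\<not> initial_event R x" "active_throughout R z \<tau> (\<tau> + D)"
  shows "x \<in> Changes R z (\<tau> + D)"
proof -
  obtain s where "s \<le> \<tau> + D" "x \<in> Changes R z s"
    using event_rebroadcast[OF assms] by blast
  then show ?thesis using Changes_mono[of s "\<tau> + D" z] by blast
qed

lemma event_relayed:
  assumes x: "occurs_at R x \<tau>" "\<not> initial_event R x"
    and r_act: "active_throughout R r \<tau> (\<tau> + D)"
    and p_act: "active_throughout R p s (\<tau> + 2 * D)"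
    and known: "\<forall>s'<s. Changes R r s' \<subseteq> Changes R p t"
    and "\<tau> + 2 * D \<le> t"
  shows "x \<in> Changes R p t"
proof -
  obtain sr E where sr: "sr \<le> \<tau> + D" "x \<in> Changes R r sr" "(r, sr, E) \<in> bcasts R" "informs R x (r, sr, E)"
    using event_rebroadcast[OF x r_act] by blast
  show ?thesis
  proof (cases "sr < s")
    case True
    then show ?thesis using known sr(2) by blast
  next
    case False
    with p_act sr(1) have "active_throughout R p sr (sr + D)"
      by (elim active_throughout_mono) auto
    then have "x \<in> Changes R p (sr + D)" by (rule informed_within_D[OF sr(3,4,2)])
    then show ?thesis using Changes_mono[of "sr + D" t p] sr(1) assms(6) by auto
  qed
qed

lemma enter_echo_received:
  assumes p: "enter_t R p = Some e" "p \<notin> S0 R" and "r \<noteq> p"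
    and r_act: "active_throughout R r e (e + D)" and p_act: "active_throughout R p e (e + 2 * D)"
  shows "\<exists>s. e \<le> s \<and> s \<le> e + D \<and> (\<forall>s'<s. Changes R r s' \<subseteq> Changes R p (e + 2 * D))"
proof -
  obtain s where s: "recv R r (p, e, MEnter p) = Some s" "e \<le> s" "s \<le> e + D"
    using enter_broadcast[OF p] recv_within_D \<open>r \<noteq> p\<close> r_act by blast
  obtain C v b where C: "(r, s, MEnterEcho p C v b) \<in> bcasts R" "\<forall>s'<s. Changes R r s' \<subseteq> C"
    using recv_MEnter[OF s(1)] by blast
  have "active_throughout R p s (s + D)"
    using p_act s(2,3) by (elim active_throughout_mono) auto
  then obtain s2 where "recv R p (r, s, MEnterEcho p C v b) = Some s2" "s2 \<le> s + D"
    using recv_within_D[OF C(1) not_sym[OF \<open>r \<noteq> p\<close>]] by blast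
  then have "C \<subseteq> Changes R p (e + 2 * D)"
    using recv_MEnterEcho Changes_mono[of s2 "e + 2 * D" p] s(3) by force
  then show ?thesis using s(2,3) C(2) by blast
qed

lemma entered_after:
  assumes "0 \<le> t0" "t0 \<le> T" "present R q T" "\<not> present R q t0"
  shows "\<exists>e. enter_t R q = Some e \<and> t0 < e \<and> e \<le> T \<and> q \<notin> S0 R"
proof -
  obtain e where e: "enter_t R q = Some e" "e \<le> T"
    using enter_before_present[OF assms(3)] by blast
  have "t0 < e"
  proof (rule ccontr)
    assume "\<not> t0 < e"
    then have "present R q t0"
      using assms(2,3) e unfolding present_def by force
    then show False using assms(4) by blast
  qed
  moreover have "q \<notin> S0 R" using S0_iff_enter_0 e(1) assms(1) \<open>t0 < e\<close> by auto
  ultimately show ?thesis using e by blast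
qed

lemma Nt_growth:
  assumes "0 \<le> t"
  shows "real (Nt R (t + D)) \<le> (1 + \<alpha>) * real (Nt R t)"
proof -
  have "{q. present R q (t + D)} \<subseteq> {q. present R q t} \<union> churners R D t"
  proof
    fix q assume "q \<in> {q. present R q (t + D)}"
    moreover have "q \<in> churners R D t" if "present R q (t + D)" "\<not> present R q t"
      using entered_after[OF assms _ that] D_pos unfolding churners_def by auto
    ultimately show "q \<in> {q. present R q t} \<union> churners R D t" by blast
  qed
  then have "card {q. present R q (t + D)} \<le> card {q. present R q t} + card (churners R D t)"
    using finite_present[OF assms] finite_churners[OF assms]
    by (meson card_Un_le card_mono finite_UnI order_trans)
  then show ?thesis
    using card_churners_le[OF assms] unfolding Nt_def by (simp add: algebra_simps)
qed

lemma leavers_entrants_churn: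
  assumes "0 \<le> t0" "t0 \<le> T" "0 < n" "T \<le> t0 + real n * D"
  shows "leavers R t0 T \<union> entrants R t0 T \<subseteq> (\<Union>i<n. churners R D (t0 + real i * D))"
proof
  fix q assume "q \<in> leavers R t0 T \<union> entrants R t0 T"
  then consider (left) l where "present R q t0" "leave_t R q = Some l" "l \<le> T"
    | (entered) "present R q T" "\<not> present R q t0"
    unfolding leavers_def entrants_def by blast
  then show "q \<in> (\<Union>i<n. churners R D (t0 + real i * D))"
  proof cases
    case left
    have "t0 < l" by (rule leave_after_present[OF left(1,2)])
    then show ?thesis
      by (intro churners_cover[of n t0 l]) (use left(2,3) assms(3,4) in auto)
  next
    case entered
    then obtain e where "enter_t R q = Some e" "t0 < e" "e \<le> T" "q \<notin> S0 R"
      using entered_after[OF assms(1,2)] by blast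
    then show ?thesis
      by (intro churners_cover[of n t0 e]) (use assms(3,4) in auto)
  qed
qed

end

section \<open>Bounded churn\<close>

definition SysInfo_known :: "('n, 'v) run \<Rightarrow> real \<Rightarrow> real \<Rightarrow> bool" where
  "SysInfo_known R D t \<longleftrightarrow> (\<forall>p e. enter_t R p = Some e \<longrightarrow> active R p t \<longrightarrow> e + 2 * D \<le> t \<longrightarrow>
     SysInfo R {0..t - D} \<subseteq> Changes R p t)"

locale ccreg_bounded = ccreg_system +
  assumes alpha_nonneg: "0 \<le> \<alpha>"
    and Delta_nonneg: "0 \<le> \<Delta>"
    and growth_lt_2: "(1 + \<alpha>)^4 < 2"
    and crash_growth_lt_1: "\<Delta> * (1 + \<alpha>)^4 < 1"
    and Nmin_pos: "0 < Nmin"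
begin

lemma Nt_growth_power:
  assumes "0 \<le> t"
  shows "real (Nt R (t + real k * D)) \<le> (1 + \<alpha>)^k * real (Nt R t)"
proof (induction k)
  case 0
  show ?case by simp
next
  case (Suc k)
  have "t + real (Suc k) * D = (t + real k * D) + D" by (simp add: algebra_simps)
  moreover have "0 \<le> t + real k * D" using assms D_pos by simp
  ultimately have "real (Nt R (t + real (Suc k) * D)) \<le> (1 + \<alpha>) * real (Nt R (t + real k * D))"
    using Nt_growth by metis
  also have "\<dots> \<le> (1 + \<alpha>) * ((1 + \<alpha>)^k * real (Nt R t))"
    using Suc.IH alpha_nonneg by (intro mult_left_mono) auto
  finally show ?case by simp
qed

lemma card_churn_windows_le:
  assumes "0 \<le> t0"
  shows "real (card (\<Union>i<n. churners R D (t0 + real i * D))) \<le> ((1 + \<alpha>)^n - 1) * real (Nt R t0)"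
proof -
  have window_nonneg: "0 \<le> t0 + real i * D" for i using assms D_pos by simp
  have "real (card (\<Union>i<n. churners R D (t0 + real i * D)))
      \<le> (\<Sum>i<n. real (card (churners R D (t0 + real i * D))))"
    using card_UN_le[of "{..<n}" "\<lambda>i. churners R D (t0 + real i * D)"] by (simp flip: of_nat_sum)
  also have "\<dots> \<le> (\<Sum>i<n. \<alpha> * ((1 + \<alpha>)^i * real (Nt R t0)))"
  proof (rule sum_mono)
    fix i
    show "real (card (churners R D (t0 + real i * D))) \<le> \<alpha> * ((1 + \<alpha>)^i * real (Nt R t0))"
      using card_churners_le[OF window_nonneg] Nt_growth_power[OF assms, of i] alpha_nonneg
      by (meson mult_left_mono order_trans)
  qed
  also have "\<dots> = ((1 + \<alpha>) - 1) * (\<Sum>i<n. (1 + \<alpha>)^i) * real (Nt R t0)"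
    by (simp add: sum_distrib_left sum_distrib_right mult.assoc)
  also have "\<dots> = ((1 + \<alpha>)^n - 1) * real (Nt R t0)"
    by (simp only: power_diff_1_eq)
  finally show ?thesis .
qed

lemma card_leavers_entrants_le:
  assumes "0 \<le> t0" "t0 \<le> T" "0 < n" "T \<le> t0 + real n * D"
  shows "real (card (leavers R t0 T)) + real (card (entrants R t0 T)) \<le> ((1 + \<alpha>)^n - 1) * real (Nt R t0)"
proof -
  have "finite (leavers R t0 T)" "finite (entrants R t0 T)"
    using finite_present assms(1,2) unfolding leavers_def entrants_def by auto
  then have "card (leavers R t0 T \<union> entrants R t0 T) = card (leavers R t0 T) + card (entrants R t0 T)"
    by (intro card_Un_disjoint) (auto simp: leavers_def entrants_def)
  moreover have "finite (\<Union>i<n. churners R D (t0 + real i * D))"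
    using finite_churners assms(1) D_pos by simp
  then have "card (leavers R t0 T \<union> entrants R t0 T) \<le> card (\<Union>i<n. churners R D (t0 + real i * D))"
    by (rule card_mono[OF _ leavers_entrants_churn[OF assms]])
  ultimately have "real (card (leavers R t0 T)) + real (card (entrants R t0 T))
      \<le> real (card (\<Union>i<n. churners R D (t0 + real i * D)))"
    by (simp only: of_nat_add[symmetric] of_nat_le_iff)
  then show ?thesis using card_churn_windows_le[OF assms(1), of n] by linarith
qed

lemma survivor:
  assumes "0 \<le> t0" "t0 \<le> T" "T \<le> t0 + 4 * D"
  shows "\<exists>r. active_throughout R r t0 T"
proof (rule ccontr)
  assume no_survivor: "\<nexists>r. active_throughout R r t0 T"
  define A where "A = {q. present R q t0}"
  define Lv where "Lv = leavers R t0 T"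
  define En where "En = entrants R t0 T"
  have T_nonneg: "0 \<le> T" using assms by linarith
  have fin: "finite A" "finite Lv" "finite {q. present R q T}"
    using finite_present[OF assms(1)] finite_present[OF T_nonneg] by (auto simp: A_def Lv_def leavers_def)
  have "A - Lv \<subseteq> {q. present R q T \<and> crashed R q T}"
  proof
    fix q assume "q \<in> A - Lv"
    then have present: "present R q t0" and stays: "\<forall>l. leave_t R q = Some l \<longrightarrow> T < l"
      unfolding A_def Lv_def leavers_def by force+
    have "present R q T" by (rule present_until[OF present assms(2) stays])
    moreover have "crashed R q T"
      using active_throughout_if_stays[OF present stays] no_survivor by blast
    ultimately show "q \<in> {q. present R q T \<and> crashed R q T}" by blast
  qed
  then have "card (A - Lv) \<le> card {q. present R q T \<and> crashed R q T}"
    using fin(3) by (intro card_mono) (auto intro: finite_subset)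
  then have crashed: "real (card (A - Lv)) \<le> \<Delta> * real (Nt R T)"
    using card_crashed_le[OF T_nonneg] by linarith
  have "{q. present R q T} \<subseteq> (A - Lv) \<union> En"
    using leave_after_present unfolding A_def Lv_def En_def leavers_def entrants_def by force
  moreover have "finite ((A - Lv) \<union> En)" using fin(1,3) unfolding En_def entrants_def by auto
  ultimately have "Nt R T \<le> card ((A - Lv) \<union> En)" unfolding Nt_def by (rule card_mono[rotated])
  also have "\<dots> \<le> card (A - Lv) + card En" by (rule card_Un_le)
  finally have "\<Delta> * real (Nt R T) \<le> \<Delta> * (real (card (A - Lv)) + real (card En))"
    using Delta_nonneg by (intro mult_left_mono) auto
  with crashed have crashed_bound: "real (card (A - Lv)) \<le> \<Delta> * (real (card (A - Lv)) + real (card En))"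
    by linarith
  have "Lv \<subseteq> A" unfolding Lv_def A_def leavers_def by blast
  then have "card A = card (A - Lv) + card Lv"
    using card_Diff_subset[OF fin(2)] card_mono[OF fin(1)] by fastforce
  then have N0: "real (Nt R t0) = real (card (A - Lv)) + real (card Lv)"
    unfolding Nt_def A_def by simp
  have "0 < real (Nt R t0)" using Nmin_le_Nt[OF assms(1)] Nmin_pos by simp
  then have "\<Delta> * (real (card (A - Lv)) + real (card En)) < real (card (A - Lv))"
    using card_leavers_entrants_le[of t0 T 4] assms unfolding N0 Lv_def[symmetric] En_def[symmetric]
    by (intro churn_crash_arith[OF Delta_nonneg growth_lt_2 crash_growth_lt_1]) auto
  with crashed_bound show False by linarith
qed

lemma enter_witness:
  assumes p: "enter_t R p = Some e" "p \<notin> S0 R" and p_act: "active_throughout R p e (e + 2 * D)"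
  shows "\<exists>r s. active_throughout R r (max 0 (e - 5 * D / 2)) (e + D) \<and> e \<le> s \<and> s \<le> e + D \<and>
    (\<forall>s'<s. Changes R r s' \<subseteq> Changes R p (e + 2 * D))"
proof -
  define t0 where "t0 = max 0 (e - 5 * D / 2)"
  have t0: "0 \<le> t0" "t0 < e" "t0 \<le> e + D" "e + D \<le> t0 + 4 * D"
    unfolding t0_def using enter_pos[OF p] D_pos by auto
  obtain r where r_act: "active_throughout R r t0 (e + D)"
    using survivor[OF t0(1,3,4)] by blast
  then have "present R r t0"
    using t0 unfolding active_throughout_def active_def by auto
  then have "r \<noteq> p"
    using enter_before_present p(1) t0(2) by force
  moreover have "active_throughout R r e (e + D)"
    using r_act t0(2) by (elim active_throughout_mono) auto
  ultimately show ?thesis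
    using enter_echo_received[OF p _ _ p_act] r_act unfolding t0_def by blast
qed

lemma old_event_known_to_witness:
  assumes IH: "\<And>t'. 0 \<le> t' \<Longrightarrow> t' < t - D \<Longrightarrow> SysInfo_known R D t'"
    and "e + 2 * D \<le> t" "5 * D / 2 \<le> e"
    and r: "enter_t R r = Some er" "er \<le> e - 5 * D / 2" "active R r (e - D / 2)"
    and x: "occurs_at R x \<tau>" "0 \<le> \<tau>" "\<tau> \<le> e - 3 * D / 2"
  shows "x \<in> Changes R r (e - D / 2)"
proof -
  have "SysInfo_known R D (e - D / 2)"
    by (rule IH) (use assms(2,3) D_pos in auto)
  then have "SysInfo R {0..e - 3 * D / 2} \<subseteq> Changes R r (e - D / 2)"
    using r unfolding SysInfo_known_def by fastforce
  moreover have "x \<in> SysInfo R {0..e - 3 * D / 2}"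
    using x unfolding SysInfo_iff_occurs_at by auto
  ultimately show ?thesis by blast
qed

lemma learned_through_witness:
  assumes IH: "\<And>t'. 0 \<le> t' \<Longrightarrow> t' < t - D \<Longrightarrow> SysInfo_known R D t'"
    and p: "enter_t R p = Some e" "p \<notin> S0 R"
    and p_act: "active_throughout R p e t" and et: "e + 2 * D \<le> t"
    and x: "occurs_at R x \<tau>" "0 \<le> \<tau>" "initial_event R x \<or> \<tau> < e"
  shows "x \<in> Changes R p t"
proof -
  define t0 where "t0 = max 0 (e - 5 * D / 2)"
  have "active_throughout R p e (e + 2 * D)"
    using p_act et by (elim active_throughout_mono) auto
  then obtain r s where r_act: "active_throughout R r t0 (e + D)" and s: "e \<le> s" "s \<le> e + D"
    and known_2D: "\<forall>s'<s. Changes R r s' \<subseteq> Changes R p (e + 2 * D)"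
    using enter_witness[OF p] unfolding t0_def by blast
  have known: "\<forall>s'<s. Changes R r s' \<subseteq> Changes R p t"
    using known_2D Changes_mono[of "e + 2 * D" t p] et by blast
  have "t0 \<le> e + D" unfolding t0_def using D_pos enter_pos[OF p] by simp
  then have "present R r t0"
    using r_act unfolding active_throughout_def active_def by simp
  then obtain er where er: "enter_t R r = Some er" "er \<le> t0"
    by (blast dest: enter_before_present)
  consider (old) "5 * D / 2 \<le> e" "\<tau> \<le> e - 3 * D / 2"
    | (initial) "initial_event R x" "\<not> (5 * D / 2 \<le> e \<and> \<tau> \<le> e - 3 * D / 2)"
    | (recent) "\<not> initial_event R x" "\<tau> < e" "t0 \<le> \<tau>"
  proof (cases "5 * D / 2 \<le> e \<and> \<tau> \<le> e - 3 * D / 2")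
    case False
    moreover have "t0 \<le> \<tau>" using False x(2) D_pos unfolding t0_def by auto
    ultimately show ?thesis using that x(3) by blast
  qed (use that in blast)
  then show ?thesis
  proof cases
    case old
    have "t0 = e - 5 * D / 2" unfolding t0_def using old(1) by simp
    then have "x \<in> Changes R r (e - D / 2)"
      using old_event_known_to_witness[OF IH et old(1) er(1)] r_act er(2) x(1,2) old(2) D_pos
      unfolding active_throughout_def by auto
    moreover have "e - D / 2 < s" using s(1) D_pos by linarith
    ultimately show ?thesis using known by blast
  next
    case initial
    then have "t0 = 0"
      using initial_event_known[OF initial(1) x(1)] D_pos unfolding t0_def by auto
    then have "x \<in> Changes R r 0" using initial_event_known_at_start[OF initial(1) x(1) er(1)] er(2) by simp
    moreover have "0 < s" using s(1) enter_pos[OF p] by linarith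
    ultimately show ?thesis using known by blast
  next
    case recent
    show ?thesis
    proof (rule event_relayed[OF x(1) recent(1) _ _ known])
      show "active_throughout R r \<tau> (\<tau> + D)"
        using r_act recent(2,3) by (elim active_throughout_mono) auto
      show "active_throughout R p s (\<tau> + 2 * D)"
        using p_act s(1) recent(2) et by (elim active_throughout_mono) auto
      show "\<tau> + 2 * D \<le> t" using recent(2) et by linarith
    qed
  qed
qed

lemma SysInfo_known_step:
  assumes IH: "\<And>t'. 0 \<le> t' \<Longrightarrow> t' < t - D \<Longrightarrow> SysInfo_known R D t'"
  shows "SysInfo_known R D t"
  unfolding SysInfo_known_def
proof (intro allI impI subsetI)
  fix p e x
  assume p: "enter_t R p = Some e" "active R p t" "e + 2 * D \<le> t" and "x \<in> SysInfo R {0..t - D}"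
  then obtain \<tau> where \<tau>: "occurs_at R x \<tau>" "0 \<le> \<tau>" "\<tau> \<le> t - D"
    unfolding SysInfo_iff_occurs_at by auto
  have p_act: "active_throughout R p e t" by (rule active_throughout_since_enter[OF p(2,1)])
  consider (initial) "initial_event R x" "p \<in> S0 R"
    | (direct) "\<not> initial_event R x" "e \<le> \<tau>"
    | (relayed) "p \<notin> S0 R" "initial_event R x \<or> \<tau> < e"
    using S0_iff_enter_0[of p] p(1) \<tau>(2) by fastforce
  then show "x \<in> Changes R p t"
  proof cases
    case initial
    then have "x \<in> Changes R p 0" using initial_event_known[OF initial(1) \<tau>(1)] by blast
    moreover have "e = 0" using S0_iff_enter_0[of p] p(1) initial(2) by simp
    ultimately show ?thesis using Changes_mono[of 0 t p] p(3) D_pos by auto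
  next
    case direct
    have "active_throughout R p \<tau> (\<tau> + D)"
      using p_act direct(2) \<tau>(3) by (elim active_throughout_mono) auto
    then have "x \<in> Changes R p (\<tau> + D)" by (rule event_learned_directly[OF \<tau>(1) direct(1)])
    then show ?thesis using Changes_mono[of "\<tau> + D" t p] \<tau>(3) by auto
  next
    case relayed
    show ?thesis
      by (rule learned_through_witness[OF IH p(1) relayed(1) p_act p(3) \<tau>(1,2) relayed(2)])
  qed
qed

theorem SysInfo_subset_Changes:
  assumes "enter_t R p = Some e" "active R p t" "e + 2 * D \<le> t"
  shows "SysInfo R {0..t - D} \<subseteq> Changes R p t"
proof -
  have "SysInfo_known R D t" using D_pos SysInfo_known_step by (rule real_step_induct)
  then show ?thesis using assms unfolding SysInfo_known_def by blast
qed

end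

theorem lemma5:
  fixes \<alpha> \<Delta> D :: real and Nmin :: nat and R :: "('n, 'v) run"
  assumes "0 < D"
    and "0 \<le> \<alpha>" and "\<alpha> \<le> 1 - 2 powr (-1/4)"
    and "0 \<le> \<Delta>" and "\<Delta> < 1"
    and "1 < ((1 - \<alpha>)^3 - \<Delta> * (1 + \<alpha>)^3) * real Nmin"
    and "ccreg_run \<alpha> \<Delta> Nmin D R"
  shows "\<forall>p e t. enter_t R p = Some e \<longrightarrow> active R p t \<longrightarrow> e + 2 * D \<le> t \<longrightarrow>
           SysInfo R {0..t - D} \<subseteq> Changes R p t"
proof -
  have "0 < Nmin" using assms(6) by (cases Nmin) auto
  moreover have "(1 + \<alpha>)^4 < 2" using assms(2,3) by (rule growth_factor_lt_2)
  moreover have "\<Delta> * (1 + \<alpha>)^4 < 1"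
  proof (rule crash_factor_lt_1)
    show "\<alpha> \<le> 1" using assms(3) powr_gt_zero[of 2 "-1/4"] by linarith
    show "\<Delta> * (1 + \<alpha>)^3 < (1 - \<alpha>)^3"
      using assms(6) by (smt (verit) mult_nonpos_nonneg of_nat_0_le_iff)
  qed (rule assms(2))
  ultimately interpret ccreg_bounded \<alpha> \<Delta> Nmin D R
    using assms(1,2,4,7) by unfold_locales auto
  show ?thesis using SysInfo_subset_Changes by blast
qed

end
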